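(* Let $SO$ be an inflationary semi-overlap function and define $I_{SO}:[0,1]^2\to[0,1]$ by $I_{SO}(u,v)=\sup\{w\in[0,1]\mid SO(u,w)\le v\}$. Then $I_{SO}$ is a fuzzy implication, and $SO$ and $I_{SO}$ satisfy the residuation property: for all $u,v,w\in[0,1]$, $SO(u,w)\le v \iff I_{SO}(u,v)\ge w$.
   Context: A semi-overlap function is a function $SO:[0,1]^2\to[0,1]$ such that for all $u,v\in[0,1]$: (S1) $SO(u,v)=SO(v,u)$; (S2) if $uv=0$ then $SO(u,v)=0$; (S3) if $uv=1$ then $SO(u,v)=1$; (S4) $SO$ is increasing in each variable; (S5) $SO$ is left-continuous, meaning that for every $u\in[0,1]$ and every nonempty family $\{v_i\mid i\in I\}\subseteq[0,1]$, $SO(u,\sup_{i\in I}v_i)=\sup_{i\in I}SO(u,v_i)$. It is inflationary if $SO(u,1)\ge u$ for all $u$. A fuzzy implication is a function $I:[0,1]^2\to[0,1]$ such that: $u\le v$ implies $I(v,w)\le I(u,w)$; $v\le w$ implies $I(u,v)\le I(u,w)$; $I(0,0)=1$; $I(1,1)=1$; $I(1,0)=0$. *)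

theory Defs
  imports Main "HOL.Real"
begin

text \<open>Functions on the unit square are modelled as real => real => real; all
conditions are required only on [0,1].\<close>

definition semi_overlap :: "(real \<Rightarrow> real \<Rightarrow> real) \<Rightarrow> bool" where
  "semi_overlap SO \<longleftrightarrow>
     (\<forall>u\<in>{0..1}. \<forall>v\<in>{0..1}. SO u v \<in> {0..1}) \<and>
     (\<forall>u\<in>{0..1}. \<forall>v\<in>{0..1}. SO u v = SO v u) \<and>
     (\<forall>u\<in>{0..1}. \<forall>v\<in>{0..1}. u * v = 0 \<longrightarrow> SO u v = 0) \<and>
     (\<forall>u\<in>{0..1}. \<forall>v\<in>{0..1}. u * v = 1 \<longrightarrow> SO u v = 1) \<and>
     (\<forall>u\<in>{0..1}. \<forall>v\<in>{0..1}. \<forall>w\<in>{0..1}. v \<le> w \<longrightarrow> SO u v \<le> SO u w) \<and>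
     (\<forall>u\<in>{0..1}. \<forall>V. V \<noteq> {} \<and> V \<subseteq> {0..1} \<longrightarrow>
        SO u (Sup V) = Sup (SO u ` V))"

definition inflationary :: "(real \<Rightarrow> real \<Rightarrow> real) \<Rightarrow> bool" where
  "inflationary SO \<longleftrightarrow> (\<forall>u\<in>{0..1}. SO u 1 \<ge> u)"

definition fuzzy_implication :: "(real \<Rightarrow> real \<Rightarrow> real) \<Rightarrow> bool" where
  "fuzzy_implication I \<longleftrightarrow>
     (\<forall>u\<in>{0..1}. \<forall>v\<in>{0..1}. I u v \<in> {0..1}) \<and>
     (\<forall>u\<in>{0..1}. \<forall>v\<in>{0..1}. \<forall>w\<in>{0..1}. u \<le> v \<longrightarrow> I v w \<le> I u w) \<and>
     (\<forall>u\<in>{0..1}. \<forall>v\<in>{0..1}. \<forall>w\<in>{0..1}. v \<le> w \<longrightarrow> I u v \<le> I u w) \<and>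
     I 0 0 = 1 \<and> I 1 1 = 1 \<and> I 1 0 = 0"

definition residual_impl :: "(real \<Rightarrow> real \<Rightarrow> real) \<Rightarrow> real \<Rightarrow> real \<Rightarrow> real" where
  "residual_impl SO u v = Sup {w \<in> {0..1}. SO u w \<le> v}"

end

theory Submission
  imports Defs
begin

text \<open>Left-continuity of \<open>SO\<close> in its second argument means that the supremum defining
\<open>I\<^sub>S\<^sub>O(u,v)\<close> is attained: \<open>SO(u, I\<^sub>S\<^sub>O(u,v)) \<le> v\<close>. Together with monotonicity this makes
\<open>SO(u,-)\<close> and \<open>I\<^sub>S\<^sub>O(u,-)\<close> a Galois connection on \<open>[0,1]\<close>, which is the residuation property.
Both monotonicity laws of \<open>I\<^sub>S\<^sub>O\<close> follow from residuation (the antitone one via commutativity),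
\<open>I\<^sub>S\<^sub>O(0,0) = I\<^sub>S\<^sub>O(1,1) = 1\<close> from the boundary conditions, and \<open>I\<^sub>S\<^sub>O(1,0) = 0\<close> from
inflationarity: \<open>SO(1,w) \<le> 0\<close> forces \<open>w \<le> SO(w,1) = SO(1,w) \<le> 0\<close>.\<close>

lemma semi_overlap_commute:
  "semi_overlap SO \<Longrightarrow> u \<in> {0..1} \<Longrightarrow> v \<in> {0..1} \<Longrightarrow> SO u v = SO v u"
  unfolding semi_overlap_def by meson

lemma semi_overlap_zero_right:
  assumes "semi_overlap SO" "u \<in> {0..1}"
  shows "SO u 0 = 0"
proof -
  have "\<forall>u\<in>{0..1}. \<forall>v\<in>{0..1}. u * v = 0 \<longrightarrow> SO u v = 0"
    using assms(1) unfolding semi_overlap_def by (elim conjE)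
  then show ?thesis using assms(2) by force
qed

lemma semi_overlap_zero_left: "semi_overlap SO \<Longrightarrow> v \<in> {0..1} \<Longrightarrow> SO 0 v = 0"
  using semi_overlap_commute semi_overlap_zero_right by fastforce

lemma semi_overlap_one_one: "semi_overlap SO \<Longrightarrow> SO 1 1 = 1"
  unfolding semi_overlap_def by (elim conjE) auto

lemma semi_overlap_mono_right:
  "semi_overlap SO \<Longrightarrow> u \<in> {0..1} \<Longrightarrow> v \<in> {0..1} \<Longrightarrow> w \<in> {0..1} \<Longrightarrow> v \<le> w
    \<Longrightarrow> SO u v \<le> SO u w"
  unfolding semi_overlap_def by meson

lemma semi_overlap_mono_left:
  assumes "semi_overlap SO" "u \<in> {0..1}" "v \<in> {0..1}" "w \<in> {0..1}" "u \<le> v"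
  shows "SO u w \<le> SO v w"
  using semi_overlap_mono_right[OF assms(1,4,2,3,5)] semi_overlap_commute[OF assms(1)] assms(2-4)
  by metis

lemma semi_overlap_Sup:
  "semi_overlap SO \<Longrightarrow> u \<in> {0..1} \<Longrightarrow> V \<noteq> {} \<Longrightarrow> V \<subseteq> {0..1}
    \<Longrightarrow> SO u (Sup V) = Sup (SO u ` V)"
  unfolding semi_overlap_def by meson

lemma residual_impl_greatest:
  assumes "w \<in> {0..1}" "SO u w \<le> v"
  shows "w \<le> residual_impl SO u v"
proof -
  have "bdd_above {w \<in> {0..1::real}. SO u w \<le> v}"
    by (rule bdd_above_mono[of "{0..1}"]) auto
  then show ?thesis unfolding residual_impl_def using assms by (intro cSup_upper) auto
qed

lemma residual_impl_in_unit:
  assumes so: "semi_overlap SO" and u: "u \<in> {0..1}" and v: "v \<in> {0..1}"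
  shows "residual_impl SO u v \<in> {0..1}"
proof -
  have "SO u 0 \<le> v" using semi_overlap_zero_right[OF so u] v by simp
  then have "0 \<le> residual_impl SO u v" by (simp add: residual_impl_greatest)
  moreover have "residual_impl SO u v \<le> 1"
    unfolding residual_impl_def using \<open>SO u 0 \<le> v\<close>
    by (intro cSup_least) (auto intro!: exI[of _ 0])
  ultimately show ?thesis by simp
qed

lemma semi_overlap_residual_impl_le:
  assumes so: "semi_overlap SO" and u: "u \<in> {0..1}" and v: "v \<in> {0..1}"
  shows "SO u (residual_impl SO u v) \<le> v"
proof -
  define S where "S = {w \<in> {0..1}. SO u w \<le> v}"
  have "0 \<in> S" using semi_overlap_zero_right[OF so u] v by (simp add: S_def)
  then have "S \<noteq> {}" by blast
  then have "SO u (Sup S) = Sup (SO u ` S)"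
    by (intro semi_overlap_Sup[OF so u]) (auto simp: S_def)
  also have "\<dots> \<le> v"
    using \<open>S \<noteq> {}\<close> by (intro cSup_least) (auto simp: S_def)
  finally show ?thesis by (simp add: residual_impl_def S_def)
qed

lemma semi_overlap_residuation:
  assumes so: "semi_overlap SO" and u: "u \<in> {0..1}" and v: "v \<in> {0..1}" and w: "w \<in> {0..1}"
  shows "SO u w \<le> v \<longleftrightarrow> w \<le> residual_impl SO u v"
proof
  assume "SO u w \<le> v"
  with w show "w \<le> residual_impl SO u v" by (rule residual_impl_greatest)
next
  assume "w \<le> residual_impl SO u v"
  then have "SO u w \<le> SO u (residual_impl SO u v)"
    using semi_overlap_mono_right[OF so u w] residual_impl_in_unit[OF so u v] by blast
  then show "SO u w \<le> v" using semi_overlap_residual_impl_le[OF so u v] by linarith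
qed

lemma residual_impl_antimono_left:
  assumes so: "semi_overlap SO" and u: "u \<in> {0..1}" and v: "v \<in> {0..1}" and w: "w \<in> {0..1}"
    and "u \<le> v"
  shows "residual_impl SO v w \<le> residual_impl SO u w"
proof -
  let ?z = "residual_impl SO v w"
  have z: "?z \<in> {0..1}" using residual_impl_in_unit[OF so v w] .
  have "SO u ?z \<le> SO v ?z" using semi_overlap_mono_left[OF so u v z \<open>u \<le> v\<close>] .
  also have "\<dots> \<le> w" using semi_overlap_residual_impl_le[OF so v w] .
  finally show ?thesis using semi_overlap_residuation[OF so u w z] by blast
qed

lemma residual_impl_mono_right:
  assumes so: "semi_overlap SO" and u: "u \<in> {0..1}" and v: "v \<in> {0..1}" and "v \<le> w"
  shows "residual_impl SO u v \<le> residual_impl SO u w"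
proof -
  let ?z = "residual_impl SO u v"
  have "SO u ?z \<le> w" using semi_overlap_residual_impl_le[OF so u v] \<open>v \<le> w\<close> by linarith
  then show ?thesis using residual_impl_in_unit[OF so u v] by (rule residual_impl_greatest[rotated])
qed

lemma residual_impl_zero_zero: "semi_overlap SO \<Longrightarrow> residual_impl SO 0 0 = 1"
  using residual_impl_greatest[of 1 SO 0 0] residual_impl_in_unit[of SO 0 0]
    semi_overlap_zero_left[of SO 1] by force

lemma residual_impl_one_one: "semi_overlap SO \<Longrightarrow> residual_impl SO 1 1 = 1"
  using residual_impl_greatest[of 1 SO 1 1] residual_impl_in_unit[of SO 1 1]
    semi_overlap_one_one[of SO] by force

lemma residual_impl_one_zero:
  assumes so: "semi_overlap SO" and infl: "inflationary SO"
  shows "residual_impl SO 1 0 = 0"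
proof -
  let ?z = "residual_impl SO 1 0"
  have z: "?z \<in> {0..1}" using residual_impl_in_unit[OF so] by simp
  then have "?z \<le> SO ?z 1" using infl unfolding inflationary_def by blast
  also have "\<dots> = SO 1 ?z" using semi_overlap_commute[OF so z] by simp
  also have "\<dots> \<le> 0" using semi_overlap_residual_impl_le[OF so] by simp
  finally show ?thesis using z by simp
qed

lemma fuzzy_implication_residual_impl:
  assumes "semi_overlap SO" "inflationary SO"
  shows "fuzzy_implication (residual_impl SO)"
  unfolding fuzzy_implication_def
  using assms residual_impl_in_unit[of SO] residual_impl_antimono_left[of SO]
    residual_impl_mono_right[of SO]
  by (simp add: residual_impl_zero_zero residual_impl_one_one residual_impl_one_zero)

theorem proposition3p9:
  fixes SO :: "real \<Rightarrow> real \<Rightarrow> real"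
  assumes "semi_overlap SO" and "inflationary SO"
  shows "fuzzy_implication (residual_impl SO) \<and>
         (\<forall>u\<in>{0..1}. \<forall>v\<in>{0..1}. \<forall>w\<in>{0..1}.
            SO u w \<le> v \<longleftrightarrow> residual_impl SO u v \<ge> w)"
  using fuzzy_implication_residual_impl[OF assms] semi_overlap_residuation[OF assms(1)]
  by blast

end
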